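(* For every $n\ge 3$, all nonnegative integers $l_1,\dots,l_n,l_\infty$, and every $i$ with $2\le i\le n-1$, the elements $s_{i,i+1}s_{i-1,i}s_{i,i+1}$ and $s_{i-1,i}s_{i,i+1}s_{i-1,i}$ of $J_n$ act identically on $X(l_1,\dots,l_n,l_\infty)$.
   Context: Cactus group: $J_n$ is the group generated by $s_{p,q}$, $1\le p<q\le n$, subject to the relations $s_{p,q}^2=e$; $s_{p,q}s_{p',q'}=s_{p',q'}s_{p,q}$ if $[p,q]$ and $[p',q']$ are disjoint; $s_{p,q}s_{p',q'}s_{p,q}=s_{p+q-q',p+q-p'}$ if $p\le p'<q'\le q$. Arc diagrams: fix nonnegative integers $l_1,\dots,l_n,l_\infty$. On the boundary circle of a closed disc place $n+1$ marked positions: position $0$ (occupied by $z_\infty$) and positions $1,\dots,n$ following it clockwise. An arc diagram is a bijective assignment of labels $z_1,\dots,z_n$ to positions $1,\dots,n$ together with a finite collection of simple arcs in the disc, pairwise disjoint except at endpoints, each joining two distinct marked points, such that $z_j$ is an endpoint of exactly $l_j$ arcs ($j\in\{1,\dots,n,\infty\}$; $l_j$ is the valence). Parallel arcs are allowed; diagrams are up to isotopy, equivalently determined by the labelling and the number of arcs between each pair of marked points. $X(l_1,\dots,l_n,l_\infty)$ is the set of such diagrams. Action: $s_{p,q}$ ($1\le p<q\le n$) acts by cutting off positions $p,\dots,q$ with a chord $\ell$ (arcs isotoped to cross $\ell$ at most once), reflecting that region by the reflection reversing $\ell$ (label at position $p+t$ goes to position $q-t$, crossing points on $\ell$ reversed),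 leaving the rest unchanged and reconnecting arcs at $\ell$. Words act right to left; this is an action of $J_n$. *)

theory Defs
  imports Main
begin

text \<open>Marked positions are 0 (occupied by z_inf) and 1..n (clockwise).
  A diagram is encoded as a pair (lab, m):
  lab p = j means that the label z_j sits at position p (1 \<le> p \<le> n);
  m a b = number of arcs joining positions a and b.\<close>

type_synonym arc_diagram = "(nat \<Rightarrow> nat) \<times> (nat \<Rightarrow> nat \<Rightarrow> nat)"

definition arc_diagrams :: "nat \<Rightarrow> (nat \<Rightarrow> nat) \<Rightarrow> nat \<Rightarrow> arc_diagram set" where
  "arc_diagrams n l linf = {(lab, m).
      bij_betw lab {1..n} {1..n} \<and> (\<forall>x. x \<notin> {1..n} \<longrightarrow> lab x = 0) \<and>
      (\<forall>a b. m a b = m b a) \<and> (\<forall>a. m a a = 0) \<and>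
      (\<forall>a b. (a > n \<or> b > n) \<longrightarrow> m a b = 0) \<and>
      (\<forall>a b c d. a < c \<and> c < b \<and> b < d \<and> 0 < m a b \<longrightarrow> m c d = 0) \<and>
      (\<Sum>b\<in>{0..n}. m 0 b) = linf \<and>
      (\<forall>p\<in>{1..n}. (\<Sum>b\<in>{0..n}. m p b) = l (lab p))}"

definition cinside :: "nat \<Rightarrow> nat \<Rightarrow> nat \<Rightarrow> bool" where
  "cinside p q x \<longleftrightarrow> p \<le> x \<and> x \<le> q"

definition crefl :: "nat \<Rightarrow> nat \<Rightarrow> nat \<Rightarrow> nat" where
  "crefl p q x = (if p \<le> x \<and> x \<le> q then p + q - x else x)"

text \<open>Outer positions listed along the chord from its p-end to its q-end:
  p-1, ..., 0, n, ..., q+1. Arcs crossing the chord, after reflection of the inner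
  region, are reconnected: the j-th crossing point (from the p-end) joins the j-th
  outer endpoint with the j-th (ascending) reflected inner endpoint.\<close>

definition cross_pairs :: "nat \<Rightarrow> nat \<Rightarrow> nat \<Rightarrow> (nat \<Rightarrow> nat \<Rightarrow> nat) \<Rightarrow> (nat \<times> nat) list" where
  "cross_pairs n p q m =
    (let outer = rev ([Suc q..<Suc n] @ [0..<p]);
         c = (\<lambda>x. \<Sum>y\<in>set outer. m x y);
         ins = concat (map (\<lambda>x. replicate (c (p + q - x)) x) [p..<Suc q]);
         outs = concat (map (\<lambda>y. replicate (\<Sum>x\<in>{p..q}. m x y) y) outer)
     in zip ins outs)"

definition cactus_gen_act :: "nat \<Rightarrow> nat \<Rightarrow> nat \<Rightarrow> arc_diagram \<Rightarrow> arc_diagram" where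
  "cactus_gen_act n p q D =
    (let lab = fst D; m = snd D; prs = cross_pairs n p q m in
     (\<lambda>x. lab (crefl p q x),
      \<lambda>a b. if cinside p q a \<and> cinside p q b then m (crefl p q a) (crefl p q b)
            else if \<not> cinside p q a \<and> \<not> cinside p q b then m a b
            else if cinside p q a then count_list prs (a, b)
            else count_list prs (b, a)))"

end

theory Submission
  imports Defs "HOL-Library.Multiset"
begin

text \<open>Only the positions \<open>a = i-1, a+1, a+2\<close> move. Planarity forces the arcs leaving this triple
  to end at the remaining positions in a fixed order: reading those positions along a chord around
  the triple, the far ends of the arcs at \<open>a\<close>, then at \<open>a+1\<close>, then at \<open>a+2\<close> form one sorted
  word. Near the triple a diagram is therefore determined by this word, the three lengths into
  which it is cut, and the numbers of arcs inside the triple. Both generators keep the word and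
  act on these six numbers by explicit piecewise-linear maps, and these satisfy the braid relation
  as soon as an arc joining \<open>a\<close> and \<open>a+2\<close> leaves \<open>a+1\<close> without outer arcs, which is again
  planarity.\<close>

lemma count_list_replicate: "count_list (replicate k c) y = (if y = c then k else 0)"
  by (induction k) auto

lemma count_list_concat_replicate_upt:
  "count_list (concat (map (\<lambda>i. replicate (f i) i) [0..<k])) j = (if j < k then f j else 0)"
  by (induction k) (auto simp: count_list_replicate)

lemma sorted_concat_replicate_upt: "sorted (concat (map (\<lambda>i. replicate (f i) i) [0..<k]))"
  by (induction k) (auto simp: sorted_append)

lemma concat_replicate_count_list:
  assumes "sorted xs" and "\<forall>x\<in>set xs. x < k"
  shows "concat (map (\<lambda>j. replicate (count_list xs j) j) [0..<k]) = xs"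
proof -
  have "mset (concat (map (\<lambda>j. replicate (count_list xs j) j) [0..<k])) = mset xs"
    using assms(2) by (auto simp: multiset_eq_iff count_mset count_list_concat_replicate_upt
        count_list_0_iff)
  then show ?thesis
    using properties_for_sort[OF _ sorted_concat_replicate_upt] sorted_sort_id[OF assms(1)]
    by metis
qed

lemma count_list_zip_replicate_append:
  "count_list (zip (replicate s p @ replicate t q) zs) (x, y) =
   (if x = p then count_list (take s zs) y else 0) + (if x = q then count_list (take t (drop s zs)) y else 0)"
proof -
  have "count_list (map (Pair c) l) (x, y) = (if x = c then count_list l y else 0)" for l c
    by (induction l) auto
  then show ?thesis by (simp add: zip_append1 zip_replicate1)
qed

lemma count_list_take_split:
  "u \<le> v \<Longrightarrow> count_list (take u W) j + count_list (drop u (take v W)) j = count_list (take v W) j"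
  by (metis append_take_drop_id count_list_append take_take min.absorb1)

lemma count_list_drop_split:
  assumes "u \<le> v"
  shows "count_list (drop u (take v W)) j + count_list (drop v W) j = count_list (drop u W) j"
proof -
  have "drop u W = take (v - u) (drop u W) @ drop (v - u) (drop u W)"
    by (rule append_take_drop_id[symmetric])
  also have "\<dots> = drop u (take v W) @ drop v W"
    using assms by (simp add: drop_take)
  finally show ?thesis
    by (metis count_list_append)
qed

lemma arc_diagramsD:
  assumes "(lab, m) \<in> arc_diagrams n l linf"
  shows "m p q = m q p" and "m p p = 0" and "n < p \<or> n < q \<Longrightarrow> m p q = 0"
    and "p < r \<Longrightarrow> r < q \<Longrightarrow> q < t \<Longrightarrow> 0 < m p q \<Longrightarrow> m r t = 0"
  using assms unfolding arc_diagrams_def mem_Collect_eq prod.case by blast+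

lemma sum_atLeastAtMost_Suc_self: "(\<Sum>y\<in>{x..Suc x}. f y) = f x + (f (Suc x) :: nat)"
proof -
  have "{x..Suc x} = {x, Suc x}" by auto
  then show ?thesis by simp
qed

lemma crefl_braid:
  "crefl (Suc a) (Suc (Suc a)) (crefl a (Suc a) (crefl (Suc a) (Suc (Suc a)) q)) =
   crefl a (Suc a) (crefl (Suc a) (Suc (Suc a)) (crefl a (Suc a) q))"
  by (auto simp: crefl_def)

lemma fst_cactus_gen_act: "fst (cactus_gen_act n p q D) = (\<lambda>x. fst D (crefl p q x))"
  by (simp add: cactus_gen_act_def Let_def)

text \<open>Near the triple of positions \<open>a, a+1, a+2\<close> a diagram is described by six numbers:
  \<open>(A, B, C)\<close> arcs from \<open>a, a+1, a+2\<close> to the other positions, and \<open>(x, y, z)\<close> arcs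
  joining \<open>a\<close> to \<open>a+1\<close>, \<open>a+1\<close> to \<open>a+2\<close> and \<open>a\<close> to \<open>a+2\<close>. The maps \<open>flip_left\<close> and
  \<open>flip_right\<close> record how \<open>s(a, a+1)\<close> and \<open>s(a+1, a+2)\<close> change them.\<close>

type_synonym triple_state = "nat \<times> nat \<times> nat \<times> nat \<times> nat \<times> nat"

definition flip_left :: "triple_state \<Rightarrow> triple_state" where
  "flip_left k = (case k of (A, B, C, x, y, z) \<Rightarrow> (B + min y A, A - y, C, x, z + min y A, y - A))"

definition flip_right :: "triple_state \<Rightarrow> triple_state" where
  "flip_right k = (case k of (A, B, C, x, y, z) \<Rightarrow> (A, C - x, B + min C x, z + min C x, y, x - C))"

definition state_size :: "triple_state \<Rightarrow> nat" where
  "state_size k = (case k of (A, B, C, x, y, z) \<Rightarrow> A + B + C)"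

lemma state_size_flip_left [simp]: "state_size (flip_left k) = state_size k"
  by (cases k) (auto simp: flip_left_def state_size_def)

lemma state_size_flip_right [simp]: "state_size (flip_right k) = state_size k"
  by (cases k) (auto simp: flip_right_def state_size_def)

lemma flip_braid:
  assumes "B = 0 \<or> z = 0"
  shows "flip_right (flip_left (flip_right (A, B, C, x, y, z))) =
         flip_left (flip_right (flip_left (A, B, C, x, y, z)))"
  using assms by (elim disjE) (simp_all add: flip_left_def flip_right_def)

text \<open>The \<open>j\<close>-th position outside the triple, read along a chord cutting off the triple from
  its \<open>a\<close>-end: \<open>a-1, \<dots>, 0, n, \<dots>, a+3\<close>.\<close>

definition outer_pos :: "nat \<Rightarrow> nat \<Rightarrow> nat \<Rightarrow> nat" where
  "outer_pos a n j = (if j < a then a - 1 - j else n + a - j)"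

definition is_outer :: "nat \<Rightarrow> nat \<Rightarrow> nat \<Rightarrow> bool" where
  "is_outer a n y \<longleftrightarrow> y < a \<or> (Suc (Suc a) < y \<and> y \<le> n)"

definition in_triple :: "nat \<Rightarrow> nat \<Rightarrow> bool" where
  "in_triple a x \<longleftrightarrow> a \<le> x \<and> x \<le> Suc (Suc a)"

lemma is_outer_not_in_triple: "is_outer a n y \<Longrightarrow> \<not> in_triple a y"
  by (auto simp: is_outer_def in_triple_def)

definition triple_seg :: "nat \<Rightarrow> nat list \<Rightarrow> nat \<Rightarrow> nat \<Rightarrow> nat \<Rightarrow> nat list" where
  "triple_seg a W u v x =
    (if x = a then take u W else if x = Suc a then drop u (take v W) else drop v W)"

definition triple_arcs :: "nat \<Rightarrow> nat \<Rightarrow> nat \<Rightarrow> nat \<Rightarrow> nat \<Rightarrow> nat \<Rightarrow> nat" where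
  "triple_arcs a ab bc ac x y =
    (if x = y then 0 else if x + y = a + Suc a then ab
     else if x + y = Suc a + Suc (Suc a) then bc else ac)"

text \<open>The word \<open>W\<close> lists, by outer index, the far endpoints of the arcs leaving the triple;
  it is cut at \<open>u\<close> and \<open>v\<close> into the parts belonging to \<open>a\<close>, \<open>a+1\<close> and \<open>a+2\<close>.\<close>

definition triple_form ::
  "nat \<Rightarrow> nat \<Rightarrow> nat list \<Rightarrow> nat \<Rightarrow> nat \<Rightarrow> nat \<Rightarrow> nat \<Rightarrow> nat \<Rightarrow> (nat \<Rightarrow> nat \<Rightarrow> nat) \<Rightarrow> nat \<Rightarrow> nat \<Rightarrow> nat"
where
  "triple_form a n W u v ab bc ac m0 x y =
    (if in_triple a x \<and> in_triple a y then triple_arcs a ab bc ac x y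
     else if in_triple a x then
       (if is_outer a n y then count_list (triple_seg a W u v x) (outer_pos a n y) else 0)
     else if in_triple a y then
       (if is_outer a n x then count_list (triple_seg a W u v y) (outer_pos a n x) else 0)
     else m0 x y)"

definition state_form ::
  "nat \<Rightarrow> nat \<Rightarrow> nat list \<Rightarrow> (nat \<Rightarrow> nat \<Rightarrow> nat) \<Rightarrow> triple_state \<Rightarrow> nat \<Rightarrow> nat \<Rightarrow> nat"
where
  "state_form a n W m0 k = (case k of (A, B, C, x, y, z) \<Rightarrow> triple_form a n W A (A + B) x y z m0)"

definition outer_word :: "(nat \<Rightarrow> nat \<Rightarrow> nat) \<Rightarrow> nat \<Rightarrow> nat \<Rightarrow> nat \<Rightarrow> nat list" where
  "outer_word m a n x = concat (map (\<lambda>j. replicate (m x (outer_pos a n j)) j) [0..<n-2])"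

definition triple_word :: "(nat \<Rightarrow> nat \<Rightarrow> nat) \<Rightarrow> nat \<Rightarrow> nat \<Rightarrow> nat list" where
  "triple_word m a n = outer_word m a n a @ outer_word m a n (Suc a) @ outer_word m a n (Suc (Suc a))"

definition triple_state_of :: "(nat \<Rightarrow> nat \<Rightarrow> nat) \<Rightarrow> nat \<Rightarrow> nat \<Rightarrow> triple_state" where
  "triple_state_of m a n =
    (length (outer_word m a n a), length (outer_word m a n (Suc a)),
     length (outer_word m a n (Suc (Suc a))),
     m a (Suc a), m (Suc a) (Suc (Suc a)), m a (Suc (Suc a)))"

lemma set_outer_word: "set (outer_word m a n x) = {j. j < n - 2 \<and> 0 < m x (outer_pos a n j)}"
  by (auto simp: outer_word_def)

lemma state_size_triple_state_of: "state_size (triple_state_of m a n) = length (triple_word m a n)"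
  by (simp add: state_size_def triple_state_of_def triple_word_def)

lemma triple_word_less: "\<forall>w\<in>set (triple_word m a n). w < n - 2"
  by (auto simp: triple_word_def outer_word_def)

lemma concat_replicate_map_outer_pos:
  "concat (map (\<lambda>y. replicate (g y) y) (map (outer_pos a n) xs)) =
   map (outer_pos a n) (concat (map (\<lambda>j. replicate (g (outer_pos a n j)) j) xs))"
  by (induction xs) auto

context
  fixes a n :: nat
  assumes a_pos: "1 \<le> a" and triple_le: "Suc (Suc a) \<le> n"
begin

lemma outer_pos_inverse: "is_outer a n y \<Longrightarrow> outer_pos a n (outer_pos a n y) = y"
  using a_pos triple_le by (auto simp: outer_pos_def is_outer_def)

lemma outer_pos_less: "is_outer a n y \<Longrightarrow> outer_pos a n y < n - 2"
  using a_pos triple_le by (auto simp: outer_pos_def is_outer_def)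

lemma is_outer_outer_pos: "j < n - 2 \<Longrightarrow> is_outer a n (outer_pos a n j)"
  using a_pos triple_le by (auto simp: outer_pos_def is_outer_def)

lemma outer_pos_inverse_index: "j < n - 2 \<Longrightarrow> outer_pos a n (outer_pos a n j) = j"
  using a_pos triple_le by (auto simp: outer_pos_def is_outer_def)

lemma not_in_triple_outer_pos: "j < n - 2 \<Longrightarrow> \<not> in_triple a (outer_pos a n j)"
  using is_outer_outer_pos is_outer_not_in_triple by blast

lemma inj_on_outer_pos: "inj_on (outer_pos a n) {0..<n-2}"
  by (rule inj_onI) (metis atLeastLessThan_iff outer_pos_inverse_index)

lemma outer_positions_eq:
  "rev ([Suc (Suc (Suc a))..<Suc n] @ [0..<a]) = map (outer_pos a n) [0..<n-2]"
proof (rule nth_equalityI)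
  show "length (rev ([Suc (Suc (Suc a))..<Suc n] @ [0..<a])) = length (map (outer_pos a n) [0..<n-2])"
    using triple_le by (simp del: upt_Suc; arith)
next
  fix j assume "j < length (rev ([Suc (Suc (Suc a))..<Suc n] @ [0..<a]))"
  then have "j < n - 2" using triple_le by (simp del: upt_Suc)
  then show "rev ([Suc (Suc (Suc a))..<Suc n] @ [0..<a]) ! j = map (outer_pos a n) [0..<n-2] ! j"
    using triple_le a_pos by (auto simp del: upt_Suc simp: rev_append nth_append rev_nth outer_pos_def)
qed

lemma outer_positions_left:
  "rev ([Suc (Suc a)..<Suc n] @ [0..<a]) = map (outer_pos a n) [0..<n-2] @ [Suc (Suc a)]"
proof -
  have "[Suc (Suc a)..<Suc n] = Suc (Suc a) # [Suc (Suc (Suc a))..<Suc n]"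
    using triple_le by (simp add: upt_conv_Cons)
  then show ?thesis using outer_positions_eq by (simp add: rev_append)
qed

lemma outer_positions_right:
  "rev ([Suc (Suc (Suc a))..<Suc n] @ [0..<Suc a]) = a # map (outer_pos a n) [0..<n-2]"
  using outer_positions_eq by (simp add: rev_append)

lemma count_list_map_outer_pos:
  "\<forall>x\<in>set B. x < n - 2 \<Longrightarrow>
   count_list (map (outer_pos a n) B) y = (if is_outer a n y then count_list B (outer_pos a n y) else 0)"
proof (induction B)
  case (Cons x B)
  have "outer_pos a n x = y \<longleftrightarrow> is_outer a n y \<and> x = outer_pos a n y"
    using Cons.prems outer_pos_inverse outer_pos_inverse_index is_outer_outer_pos
    by (metis list.set_intros(1))
  then show ?case using Cons by auto
qed simp

lemma concat_replicate_outer_pos: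
  assumes "sorted V" and "\<forall>w\<in>set V. w < n - 2"
    and "\<And>j. j < n - 2 \<Longrightarrow> g (outer_pos a n j) = count_list V j"
  shows "concat (map (\<lambda>y. replicate (g y) y) (map (outer_pos a n) [0..<n-2])) = map (outer_pos a n) V"
proof -
  have eq: "map (\<lambda>j. replicate (g (outer_pos a n j)) j) [0..<n-2] =
            map (\<lambda>j. replicate (count_list V j) j) [0..<n-2]"
    using assms(3) by (intro map_cong) auto
  show ?thesis
    unfolding concat_replicate_map_outer_pos eq concat_replicate_count_list[OF assms(1,2)] ..
qed

lemma triple_form_outer:
  "in_triple a x \<Longrightarrow> j < n - 2 \<Longrightarrow>
   triple_form a n W u v ab bc ac m0 x (outer_pos a n j) = count_list (triple_seg a W u v x) j"
  by (simp add: triple_form_def not_in_triple_outer_pos is_outer_outer_pos outer_pos_inverse_index)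

lemma triple_form_outer_sum:
  assumes "\<forall>w\<in>set W. w < n - 2" and "in_triple a x"
  shows "(\<Sum>y\<in>outer_pos a n ` {0..<n-2}. triple_form a n W u v ab bc ac m0 x y) =
         length (triple_seg a W u v x)"
proof -
  have "(\<Sum>y\<in>outer_pos a n ` {0..<n-2}. triple_form a n W u v ab bc ac m0 x y) =
        (\<Sum>j\<in>{0..<n-2}. count_list (triple_seg a W u v x) j)"
    using assms(2) by (simp add: sum.reindex[OF inj_on_outer_pos] triple_form_outer)
  also have "\<dots> = length (triple_seg a W u v x)"
    using assms(1) by (intro sum_count_set) (auto simp: triple_seg_def dest!: in_set_dropD in_set_takeD)
  finally show ?thesis .
qed

lemma cross_pairs_left:
  assumes W: "sorted W" "\<forall>w\<in>set W. w < n - 2" and uv: "u \<le> v" "v \<le> length W"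
  shows "cross_pairs n a (Suc a) (triple_form a n W u v ab bc ac m0) =
    zip (replicate (v - u + bc) a @ replicate (u + ac) (Suc a))
        (map (outer_pos a n) (take v W) @ replicate (ac + bc) (Suc (Suc a)))"
proof -
  define m where "m = triple_form a n W u v ab bc ac m0"
  define OL where "OL = map (outer_pos a n) [0..<n-2]"
  have outer: "rev ([Suc (Suc a)..<Suc n] @ [0..<a]) = OL @ [Suc (Suc a)]"
    unfolding OL_def by (rule outer_positions_left)
  have set_outer: "set (OL @ [Suc (Suc a)]) = insert (Suc (Suc a)) (outer_pos a n ` {0..<n-2})"
    by (auto simp: OL_def)
  have triple_notin: "Suc (Suc a) \<notin> outer_pos a n ` {0..<n-2}"
    using not_in_triple_outer_pos by (fastforce simp: in_triple_def)
  have row: "(\<Sum>y\<in>set (OL @ [Suc (Suc a)]). m x y) =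
             length (triple_seg a W u v x) + (if x = a then ac else bc)"
    if "x = a \<or> x = Suc a" for x
    using that triple_notin triple_form_outer_sum[OF W(2), of x] unfolding set_outer m_def
    by (auto simp: triple_form_def triple_arcs_def in_triple_def)
  have ins: "concat (map (\<lambda>x. replicate (\<Sum>y\<in>set (OL @ [Suc (Suc a)]). m (a + Suc a - x) y) x)
               [a..<Suc (Suc a)]) = replicate (v - u + bc) a @ replicate (u + ac) (Suc a)"
    using row uv by (simp add: triple_seg_def)
  have col: "(\<Sum>x\<in>{a..Suc a}. m x (outer_pos a n j)) = count_list (take v W) j" if "j < n - 2" for j
    using that count_list_take_split[OF uv(1)]
    by (simp add: sum_atLeastAtMost_Suc_self m_def triple_form_outer in_triple_def triple_seg_def)
  have outs: "concat (map (\<lambda>y. replicate (\<Sum>x\<in>{a..Suc a}. m x y) y) (OL @ [Suc (Suc a)])) =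
              map (outer_pos a n) (take v W) @ replicate (ac + bc) (Suc (Suc a))"
    using concat_replicate_outer_pos[OF sorted_wrt_take[OF W(1)] _ col] W(2)
    by (auto simp: OL_def sum_atLeastAtMost_Suc_self m_def triple_form_def triple_arcs_def
        in_triple_def dest: in_set_takeD)
  show ?thesis
    unfolding m_def[symmetric] cross_pairs_def Let_def outer ins outs ..
qed

lemma cross_pairs_right:
  assumes W: "sorted W" "\<forall>w\<in>set W. w < n - 2" and uv: "u \<le> v" "v \<le> length W"
  shows "cross_pairs n (Suc a) (Suc (Suc a)) (triple_form a n W u v ab bc ac m0) =
    zip (replicate (ac + (length W - v)) (Suc a) @ replicate (ab + (v - u)) (Suc (Suc a)))
        (replicate (ab + ac) a @ map (outer_pos a n) (drop u W))"
proof -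
  define m where "m = triple_form a n W u v ab bc ac m0"
  define OL where "OL = map (outer_pos a n) [0..<n-2]"
  have outer: "rev ([Suc (Suc (Suc a))..<Suc n] @ [0..<Suc a]) = a # OL"
    unfolding OL_def by (rule outer_positions_right)
  have set_outer: "set (a # OL) = insert a (outer_pos a n ` {0..<n-2})"
    by (auto simp: OL_def)
  have triple_notin: "a \<notin> outer_pos a n ` {0..<n-2}"
    using not_in_triple_outer_pos by (fastforce simp: in_triple_def)
  have row: "(\<Sum>y\<in>set (a # OL). m x y) =
             length (triple_seg a W u v x) + (if x = Suc a then ab else ac)"
    if "x = Suc a \<or> x = Suc (Suc a)" for x
    using that triple_notin triple_form_outer_sum[OF W(2), of x] unfolding set_outer m_def
    by (auto simp: triple_form_def triple_arcs_def in_triple_def)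
  have ins: "concat (map (\<lambda>x. replicate (\<Sum>y\<in>set (a # OL). m (Suc a + Suc (Suc a) - x) y) x)
               [Suc a..<Suc (Suc (Suc a))]) =
             replicate (ac + (length W - v)) (Suc a) @ replicate (ab + (v - u)) (Suc (Suc a))"
    using row uv by (simp add: triple_seg_def ac_simps)
  have col: "(\<Sum>x\<in>{Suc a..Suc (Suc a)}. m x (outer_pos a n j)) = count_list (drop u W) j"
    if "j < n - 2" for j
    using that count_list_drop_split[OF uv(1)]
    by (simp add: sum_atLeastAtMost_Suc_self m_def triple_form_outer in_triple_def triple_seg_def)
  have outs: "concat (map (\<lambda>y. replicate (\<Sum>x\<in>{Suc a..Suc (Suc a)}. m x y) y) (a # OL)) =
              replicate (ab + ac) a @ map (outer_pos a n) (drop u W)"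
    using concat_replicate_outer_pos[OF sorted_wrt_drop[OF W(1)] _ col] W(2)
    by (auto simp: OL_def sum_atLeastAtMost_Suc_self m_def triple_form_def triple_arcs_def
        in_triple_def dest: in_set_dropD)
  show ?thesis
    unfolding m_def[symmetric] cross_pairs_def Let_def outer ins outs ..
qed

lemma triple_form_act_left:
  fixes W :: "nat list" and u v ab bc ac :: nat
  assumes W: "sorted W" "\<forall>w\<in>set W. w < n - 2" and uv: "u \<le> v" "v \<le> length W"
  defines "s \<equiv> v - u + bc"
  shows "snd (cactus_gen_act n a (Suc a) (lab, triple_form a n W u v ab bc ac m0)) =
     triple_form a n W (min s v) v ab (ac + bc - (s - min s v)) (s - min s v) m0"
proof -
  define r where "r = ac + bc"
  define zs where "zs = map (outer_pos a n) (take v W) @ replicate r (Suc (Suc a))"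
  have cp: "cross_pairs n a (Suc a) (triple_form a n W u v ab bc ac m0) =
            zip (replicate s a @ replicate (u + ac) (Suc a)) zs"
    unfolding s_def zs_def r_def by (rule cross_pairs_left[OF W uv])
  have lv: "length (map (outer_pos a n) (take v W)) = v" using uv by simp
  \<comment> \<open>The \<open>s\<close> crossing points now ending at \<open>a\<close> meet the first \<open>s\<close> outer ends: an initial
    part of \<open>W\<close>, then arcs to \<open>a+2\<close>.\<close>
  have tk: "take s zs = map (outer_pos a n) (take (min s v) W) @ replicate (s - min s v) (Suc (Suc a))"
    unfolding zs_def take_append lv using uv by (simp add: take_map min.commute s_def r_def)
  have dr: "take (u + ac) (drop s zs) =
            map (outer_pos a n) (drop (min s v) (take v W)) @ replicate (r - (s - min s v)) (Suc (Suc a))"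
  proof -
    have "length (drop s zs) = u + ac" using uv by (simp add: zs_def s_def r_def)
    then have "take (u + ac) (drop s zs) = drop s zs" by simp
    also have "\<dots> = map (outer_pos a n) (drop (min s v) (take v W)) @ replicate (r - (s - min s v)) (Suc (Suc a))"
      unfolding zs_def drop_append lv using uv by (cases "s \<le> v") (auto simp: drop_map min_def)
    finally show ?thesis .
  qed
  have Wt: "\<forall>x\<in>set (take k W). x < n - 2" "\<forall>x\<in>set (drop k (take v W)). x < n - 2" for k
    using W(2) by (auto dest: in_set_takeD in_set_dropD)
  have not_outer: "\<not> is_outer a n (Suc (Suc a))" "\<not> is_outer a n a" "\<not> is_outer a n (Suc a)"
    by (auto simp: is_outer_def)
  have cA: "count_list (zip (replicate s a @ replicate (u + ac) (Suc a)) zs) (a, y) =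
     (if is_outer a n y then count_list (take (min s v) W) (outer_pos a n y) else 0) +
     (if y = Suc (Suc a) then s - min s v else 0)" for y
    by (simp add: count_list_zip_replicate_append tk count_list_map_outer_pos Wt count_list_replicate)
  have cB: "count_list (zip (replicate s a @ replicate (u + ac) (Suc a)) zs) (Suc a, y) =
     (if is_outer a n y then count_list (drop (min s v) (take v W)) (outer_pos a n y) else 0) +
     (if y = Suc (Suc a) then r - (s - min s v) else 0)" for y
    by (simp add: count_list_zip_replicate_append dr count_list_map_outer_pos Wt count_list_replicate)
  show ?thesis
  proof (intro ext)
    fix x y
    show "snd (cactus_gen_act n a (Suc a) (lab, triple_form a n W u v ab bc ac m0)) x y =
       triple_form a n W (min s v) v ab (ac + bc - (s - min s v)) (s - min s v) m0 x y"
      unfolding cactus_gen_act_def Let_def snd_conv cp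
      by (cases "x = a"; cases "x = Suc a"; cases "y = a"; cases "y = Suc a")
        (simp_all add: cinside_def crefl_def cA cB r_def triple_form_def triple_arcs_def
          triple_seg_def in_triple_def not_outer)
  qed
qed

lemma triple_form_act_right:
  fixes W :: "nat list" and u v ab bc ac :: nat
  assumes W: "sorted W" "\<forall>w\<in>set W. w < n - 2" and uv: "u \<le> v" "v \<le> length W"
  defines "s \<equiv> ac + (length W - v)" and "q \<equiv> ab + ac"
  shows "snd (cactus_gen_act n (Suc a) (Suc (Suc a)) (lab, triple_form a n W u v ab bc ac m0)) =
     triple_form a n W u (u + (s - min s q)) (min s q) bc (q - min s q) m0"
proof -
  define zs where "zs = replicate q a @ map (outer_pos a n) (drop u W)"
  define v' where "v' = u + (s - min s q)"
  have cp: "cross_pairs n (Suc a) (Suc (Suc a)) (triple_form a n W u v ab bc ac m0) =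
            zip (replicate s (Suc a) @ replicate (ab + (v - u)) (Suc (Suc a))) zs"
    unfolding s_def zs_def q_def by (rule cross_pairs_right[OF W uv])
  have v'_eq: "v' = u + (s - q)" by (simp add: v'_def min_def)
  have lq: "length (replicate q a) = q" by simp
  \<comment> \<open>The \<open>s\<close> crossing points now ending at \<open>a+1\<close> meet the first \<open>s\<close> outer ends: arcs to
    \<open>a\<close>, then a part of \<open>W\<close> starting at \<open>u\<close>.\<close>
  have tk: "take s zs = replicate (min s q) a @ map (outer_pos a n) (drop u (take v' W))"
    unfolding zs_def take_append lq by (simp add: take_map take_drop v'_eq add.commute)
  have dr: "take (ab + (v - u)) (drop s zs) = replicate (q - s) a @ map (outer_pos a n) (drop v' W)"
  proof -
    have "length (drop s zs) = ab + (v - u)" using uv by (simp add: zs_def s_def q_def)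
    then have "take (ab + (v - u)) (drop s zs) = drop s zs" by simp
    also have "\<dots> = replicate (q - s) a @ map (outer_pos a n) (drop v' W)"
      unfolding zs_def drop_append lq by (simp add: drop_map v'_eq add.commute)
    finally show ?thesis .
  qed
  have Wt: "\<forall>x\<in>set (drop u (take k W)). x < n - 2" "\<forall>x\<in>set (drop k W). x < n - 2" for k
    using W(2) by (auto dest: in_set_takeD in_set_dropD)
  have not_outer: "\<not> is_outer a n (Suc (Suc a))" "\<not> is_outer a n a" "\<not> is_outer a n (Suc a)"
    by (auto simp: is_outer_def)
  have cA: "count_list (zip (replicate s (Suc a) @ replicate (ab + (v - u)) (Suc (Suc a))) zs) (Suc a, y) =
     (if y = a then min s q else 0) +
     (if is_outer a n y then count_list (drop u (take v' W)) (outer_pos a n y) else 0)" for y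
    by (simp add: count_list_zip_replicate_append tk count_list_map_outer_pos Wt count_list_replicate)
  have cB: "count_list (zip (replicate s (Suc a) @ replicate (ab + (v - u)) (Suc (Suc a))) zs)
              (Suc (Suc a), y) =
     (if y = a then q - min s q else 0) +
     (if is_outer a n y then count_list (drop v' W) (outer_pos a n y) else 0)" for y
  proof -
    have "q - s = q - min s q" by simp
    then show ?thesis
      by (simp add: count_list_zip_replicate_append dr count_list_map_outer_pos Wt count_list_replicate)
  qed
  show ?thesis
  proof (intro ext)
    fix x y
    show "snd (cactus_gen_act n (Suc a) (Suc (Suc a)) (lab, triple_form a n W u v ab bc ac m0)) x y =
       triple_form a n W u (u + (s - min s q)) (min s q) bc (q - min s q) m0 x y"
      unfolding cactus_gen_act_def Let_def snd_conv cp v'_def[symmetric]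
      by (cases "x = Suc a"; cases "x = Suc (Suc a)"; cases "y = Suc a"; cases "y = Suc (Suc a)")
        (simp_all add: cinside_def crefl_def cA cB triple_form_def triple_arcs_def
          triple_seg_def in_triple_def not_outer q_def)
  qed
qed

lemma state_form_act_left:
  assumes W: "sorted W" "\<forall>w\<in>set W. w < n - 2" and size: "state_size k = length W"
  shows "cactus_gen_act n a (Suc a) (lab, state_form a n W m0 k) =
         (\<lambda>q. lab (crefl a (Suc a) q), state_form a n W m0 (flip_left k))"
proof -
  obtain A B C x y z where k: "k = (A, B, C, x, y, z)" by (cases k)
  have uv: "A \<le> A + B" "A + B \<le> length W" using size by (auto simp: k state_size_def)
  have "snd (cactus_gen_act n a (Suc a) (lab, state_form a n W m0 k)) = state_form a n W m0 (flip_left k)"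
    unfolding k state_form_def flip_left_def prod.case triple_form_act_left[OF W uv]
    by (cases "y \<le> A") (simp_all add: min_def add.commute)
  then show ?thesis by (simp add: prod_eq_iff fst_cactus_gen_act)
qed

lemma state_form_act_right:
  assumes W: "sorted W" "\<forall>w\<in>set W. w < n - 2" and size: "state_size k = length W"
  shows "cactus_gen_act n (Suc a) (Suc (Suc a)) (lab, state_form a n W m0 k) =
         (\<lambda>q. lab (crefl (Suc a) (Suc (Suc a)) q), state_form a n W m0 (flip_right k))"
proof -
  obtain A B C x y z where k: "k = (A, B, C, x, y, z)" by (cases k)
  have uv: "A \<le> A + B" "A + B \<le> length W" and C: "length W - (A + B) = C"
    using size by (auto simp: k state_size_def)
  have "snd (cactus_gen_act n (Suc a) (Suc (Suc a)) (lab, state_form a n W m0 k)) =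
        state_form a n W m0 (flip_right k)"
    unfolding k state_form_def flip_right_def prod.case triple_form_act_right[OF W uv] C
    by (cases "C \<le> x") (simp_all add: min_def add.commute)
  then show ?thesis by (simp add: prod_eq_iff fst_cactus_gen_act)
qed

lemma planar_outer_order:
  assumes D: "(lab, m) \<in> arc_diagrams n l linf"
    and xy: "x < y" "a \<le> x" "y \<le> Suc (Suc a)"
    and j: "j < n - 2" "j' < n - 2"
    and pos: "0 < m x (outer_pos a n j)" "0 < m y (outer_pos a n j')"
  shows "j \<le> j'"
proof (rule ccontr)
  assume "\<not> j \<le> j'"
  then have jj: "j' < j" by simp
  have pos': "0 < m (outer_pos a n j) x" "0 < m (outer_pos a n j') y"
    using pos arc_diagramsD(1)[OF D] by metis+
  note cross = arc_diagramsD(4)[OF D]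
  show False
  proof (cases "j' < a")
    case True
    show False
    proof (cases "j < a")
      case True
      have "outer_pos a n j < outer_pos a n j'" "outer_pos a n j' < x"
        using \<open>j' < a\<close> True jj xy a_pos by (auto simp: outer_pos_def)
      then have "m (outer_pos a n j') y = 0"
        using cross[of "outer_pos a n j" "outer_pos a n j'" x y] xy pos' by simp
      then show False using pos' by simp
    next
      case False
      have "outer_pos a n j' < x" "y < outer_pos a n j"
        using \<open>j' < a\<close> False j xy a_pos triple_le by (auto simp: outer_pos_def)
      then have "m x (outer_pos a n j) = 0"
        using cross[of "outer_pos a n j'" x y "outer_pos a n j"] xy pos' by simp
      then show False using pos by simp
    qed
  next
    case False
    have "y < outer_pos a n j" "outer_pos a n j < outer_pos a n j'"
      using False jj j xy a_pos triple_le by (auto simp: outer_pos_def)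
    then have "m y (outer_pos a n j') = 0"
      using cross[of x y "outer_pos a n j" "outer_pos a n j'"] xy pos by simp
    then show False using pos by simp
  qed
qed

lemma sorted_triple_word:
  assumes "(lab, m) \<in> arc_diagrams n l linf"
  shows "sorted (triple_word m a n)"
proof -
  have ord: "\<forall>p\<in>set (outer_word m a n x). \<forall>q\<in>set (outer_word m a n y). p \<le> q"
    if "x < y" "a \<le> x" "y \<le> Suc (Suc a)" for x y
    using planar_outer_order[OF assms that] unfolding set_outer_word by auto
  have "sorted (outer_word m a n x)" for x
    unfolding outer_word_def by (rule sorted_concat_replicate_upt)
  moreover have "\<forall>p\<in>set (outer_word m a n a). \<forall>q\<in>set (outer_word m a n (Suc a)). p \<le> q"
    and "\<forall>p\<in>set (outer_word m a n a). \<forall>q\<in>set (outer_word m a n (Suc (Suc a))). p \<le> q"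
    and "\<forall>p\<in>set (outer_word m a n (Suc a)). \<forall>q\<in>set (outer_word m a n (Suc (Suc a))). p \<le> q"
    by (rule ord; simp)+
  ultimately show ?thesis
    unfolding triple_word_def by (auto simp: sorted_append)
qed

lemma outer_word_middle_Nil:
  assumes "(lab, m) \<in> arc_diagrams n l linf" and "0 < m a (Suc (Suc a))"
  shows "outer_word m a n (Suc a) = []"
proof -
  note cross = arc_diagramsD(4)[OF assms(1)]
  have "m (Suc a) (outer_pos a n j) = 0" if "j < n - 2" for j
  proof (cases "j < a")
    case True
    then have "outer_pos a n j < a" using a_pos by (auto simp: outer_pos_def)
    then have "m (outer_pos a n j) (Suc a) = 0"
      using cross[of "outer_pos a n j" a "Suc a" "Suc (Suc a)"] assms(2) by auto
    then show ?thesis using arc_diagramsD(1)[OF assms(1)] by metis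
  next
    case False
    then have "Suc (Suc a) < outer_pos a n j" using that triple_le by (auto simp: outer_pos_def)
    then show ?thesis using cross[of a "Suc a" "Suc (Suc a)"] assms(2) by auto
  qed
  then have "set (outer_word m a n (Suc a)) = {}"
    unfolding set_outer_word by auto
  then show ?thesis by simp
qed

lemma state_form_triple_state_of:
  assumes "(lab, m) \<in> arc_diagrams n l linf"
  shows "state_form a n (triple_word m a n) m (triple_state_of m a n) = m"
proof (intro ext)
  fix x y
  note sym = arc_diagramsD(1)[OF assms] and diag = arc_diagramsD(2)[OF assms]
  define W where "W = triple_word m a n"
  define u where "u = length (outer_word m a n a)"
  define v where "v = u + length (outer_word m a n (Suc a))"
  have seg: "triple_seg a W u v x = outer_word m a n x" if "in_triple a x" for x
    using that by (auto simp: triple_seg_def in_triple_def le_Suc_eq W_def u_def v_def triple_word_def)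
  have row: "count_list (triple_seg a W u v x) (outer_pos a n y) = m x y"
    if "in_triple a x" "is_outer a n y" for x y
    using that by (simp add: seg outer_word_def count_list_concat_replicate_upt outer_pos_less outer_pos_inverse)
  have far: "m x y = 0" if "in_triple a x" "\<not> is_outer a n y" "\<not> in_triple a y" for x y
    using that arc_diagramsD(3)[OF assms] triple_le by (auto simp: in_triple_def is_outer_def)
  have "triple_form a n W u v (m a (Suc a)) (m (Suc a) (Suc (Suc a))) (m a (Suc (Suc a))) m x y = m x y"
  proof (cases "in_triple a x \<and> in_triple a y")
    case True
    then have "x = a \<or> x = Suc a \<or> x = Suc (Suc a)" "y = a \<or> y = Suc a \<or> y = Suc (Suc a)"
      by (auto simp: in_triple_def le_Suc_eq)
    then show ?thesis
      using sym diag by (elim disjE) (simp_all add: triple_form_def triple_arcs_def in_triple_def)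
  next
    case False
    then show ?thesis
      using row[of x y] row[of y x] far[of x y] far[of y x] sym by (auto simp: triple_form_def)
  qed
  then show "state_form a n (triple_word m a n) m (triple_state_of m a n) x y = m x y"
    by (simp add: state_form_def triple_state_of_def W_def u_def v_def)
qed

lemma cactus_gen_act_braid:
  assumes "D \<in> arc_diagrams n l linf"
  shows "cactus_gen_act n (Suc a) (Suc (Suc a)) (cactus_gen_act n a (Suc a)
           (cactus_gen_act n (Suc a) (Suc (Suc a)) D)) =
         cactus_gen_act n a (Suc a) (cactus_gen_act n (Suc a) (Suc (Suc a))
           (cactus_gen_act n a (Suc a) D))"
proof -
  obtain lab m where D: "D = (lab, m)" by (cases D)
  define W where "W = triple_word m a n"
  define k where "k = triple_state_of m a n"
  have rep: "D = (lab, state_form a n W m k)"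
    using state_form_triple_state_of assms by (simp add: D W_def k_def)
  have W: "sorted W" "\<forall>w\<in>set W. w < n - 2"
    using sorted_triple_word assms triple_word_less by (auto simp: D W_def)
  have size: "state_size k = length W"
    by (simp add: W_def k_def state_size_triple_state_of)
  have braid: "flip_right (flip_left (flip_right k)) = flip_left (flip_right (flip_left k))"
    unfolding k_def triple_state_of_def
    by (rule flip_braid) (use outer_word_middle_Nil assms in \<open>auto simp: D\<close>)
  show ?thesis
    unfolding rep using state_form_act_left[OF W] state_form_act_right[OF W] size braid crefl_braid
    by simp
qed

end

theorem mainTheorem15:
  fixes n i linf :: nat and l :: "nat \<Rightarrow> nat"
  assumes "3 \<le> n" and "2 \<le> i" and "i \<le> n - 1"
  shows "\<forall>D \<in> arc_diagrams n l linf.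
    cactus_gen_act n i (i+1) (cactus_gen_act n (i-1) i (cactus_gen_act n i (i+1) D)) =
    cactus_gen_act n (i-1) i (cactus_gen_act n i (i+1) (cactus_gen_act n (i-1) i D))"
proof -
  obtain a where i: "i = Suc a" using assms(2) by (cases i) auto
  have "1 \<le> a" "Suc (Suc a) \<le> n" using assms i by auto
  then show ?thesis
    using cactus_gen_act_braid by (simp add: i)
qed

end
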